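(* Let $A=\begin{bmatrix} a_1 & b_1 & 0\\ b_1 & a_2 & b_2\\ 0 & b_2 & a_3\end{bmatrix}$ be a positive semidefinite matrix with nonnegative entries $a_1,a_2,a_3,b_1,b_2\geq 0$. Then $A$ is infinitely divisible if and only if $b_1b_2=0$.
   Context: For a nonnegative matrix $A=[a_{ij}]$ and $r>0$, $A^{\circ r}=[a_{ij}^r]$. A nonnegative symmetric matrix $A$ is infinitely divisible if $A^{\circ r}$ is positive semidefinite for every $r>0$. *)

theory Defs
  imports "HOL-Analysis.Analysis"
begin

definition hadamard_powr :: "real \<Rightarrow> real^'n^'n \<Rightarrow> real^'n^'n" where
  "hadamard_powr r A = (\<chi> i j. (A $ i $ j) powr r)"

definition nonneg_matrix :: "real^'n^'n \<Rightarrow> bool" where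
  "nonneg_matrix A \<longleftrightarrow> (\<forall>i j. 0 \<le> A $ i $ j)"

definition symmetric_matrix :: "real^'n^'n \<Rightarrow> bool" where
  "symmetric_matrix A \<longleftrightarrow> transpose A = A"

definition psd :: "real^'n^'n \<Rightarrow> bool" where
  "psd A \<longleftrightarrow> symmetric_matrix A \<and> (\<forall>x. 0 \<le> x \<bullet> (A *v x))"

definition infinitely_divisible :: "real^'n^'n \<Rightarrow> bool" where
  "infinitely_divisible A \<longleftrightarrow> nonneg_matrix A \<and> symmetric_matrix A \<and>
     (\<forall>r>0. psd (hadamard_powr r A))"

end

theory Submission
  imports Defs
begin

text \<open>
  If \<open>b\<^sub>1 = 0\<close> the matrix is the direct sum of \<open>a\<^sub>1\<close> and the block
  \<open>[[a\<^sub>2, b\<^sub>2], [b\<^sub>2, a\<^sub>3]]\<close>, which is positive semidefinite iff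
  \<open>a\<^sub>2, a\<^sub>3 \<ge> 0\<close> and \<open>b\<^sub>2\<^sup>2 \<le> a\<^sub>2 a\<^sub>3\<close>; raising everything to the power \<open>r\<close>
  preserves these conditions. The case \<open>b\<^sub>2 = 0\<close> is the mirror image.
  If \<open>b\<^sub>1, b\<^sub>2 > 0\<close>, then as \<open>r \<rightarrow> 0\<^sup>+\<close> each positive entry of \<open>A\<^sup>\<circ>\<^sup>r\<close> tends to \<open>1\<close>
  and each zero entry stays \<open>0\<close>, so the quadratic form of \<open>A\<^sup>\<circ>\<^sup>r\<close> at \<open>(1, -1, 1)\<close>
  tends to at most \<open>3 - 4 < 0\<close>.
\<close>

lemma tendsto_powr_exponent:
  fixes a :: real
  assumes "(g \<longlongrightarrow> b) F"
  shows "((\<lambda>x. a powr g x) \<longlongrightarrow> a powr b) F"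
proof (cases "a = 0")
  case False
  then show ?thesis by (intro tendsto_powr tendsto_const assms)
qed simp

lemma binary_quadratic_form_nonneg_iff:
  fixes p q c :: real
  shows "(\<forall>x y. 0 \<le> p*x*x + 2*c*x*y + q*y*y) \<longleftrightarrow> 0 \<le> p \<and> 0 \<le> q \<and> c*c \<le> p*q"
proof
  assume nonneg: "\<forall>x y. 0 \<le> p*x*x + 2*c*x*y + q*y*y"
  have "0 \<le> p" "0 \<le> q"
    using nonneg[rule_format, of 1 0] nonneg[rule_format, of 0 1] by simp_all
  moreover have "c*c \<le> p*q"
  proof -
    consider "0 < p" | "0 < q" | "p = 0" "q = 0"
      using \<open>0 \<le> p\<close> \<open>0 \<le> q\<close> by linarith
    then show ?thesis
    proof cases
      case 1
      have "0 \<le> p * (p*q - c*c)"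
        using nonneg[rule_format, of "-c" p] by (simp add: algebra_simps)
      with 1 show ?thesis by (simp add: zero_le_mult_iff)
    next
      case 2
      have "0 \<le> q * (p*q - c*c)"
        using nonneg[rule_format, of q "-c"] by (simp add: algebra_simps)
      with 2 show ?thesis by (simp add: zero_le_mult_iff)
    next
      case 3
      then show ?thesis using nonneg[rule_format, of "-c" 1] by simp
    qed
  qed
  ultimately show "0 \<le> p \<and> 0 \<le> q \<and> c*c \<le> p*q" by blast
next
  assume "0 \<le> p \<and> 0 \<le> q \<and> c*c \<le> p*q"
  then have p: "0 \<le> p" and q: "0 \<le> q" and disc: "c*c \<le> p*q" by auto
  show "\<forall>x y. 0 \<le> p*x*x + 2*c*x*y + q*y*y"
  proof (intro allI)
    fix x y :: real
    show "0 \<le> p*x*x + 2*c*x*y + q*y*y"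
    proof (cases "p = 0")
      case True
      with disc have "c = 0" by (auto simp: mult_le_0_iff)
      with True q show ?thesis by (simp add: mult.assoc)
    next
      case False
      have "p * (p*x*x + 2*c*x*y + q*y*y) = (p*x + c*y)\<^sup>2 + (p*q - c*c)*(y*y)"
        by (simp add: algebra_simps power2_eq_square)
      also have "\<dots> \<ge> 0"
        using disc by (simp add: mult_nonneg_nonneg)
      finally show ?thesis using False p by (simp add: zero_le_mult_iff)
    qed
  qed
qed

lemma square_le_mult_powr:
  fixes p q c r :: real
  assumes "0 \<le> r" "0 \<le> c" "0 \<le> p" "0 \<le> q" "c*c \<le> p*q"
  shows "c powr r * c powr r \<le> p powr r * q powr r"
  using powr_mono2[OF \<open>0 \<le> r\<close> _ \<open>c*c \<le> p*q\<close>] assms by (simp add: powr_mult)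

abbreviation tridiag3 :: "real \<Rightarrow> real \<Rightarrow> real \<Rightarrow> real \<Rightarrow> real \<Rightarrow> real^3^3" where
  "tridiag3 a1 a2 a3 b1 b2 \<equiv> vector [vector [a1, b1, 0], vector [b1, a2, b2], vector [0, b2, a3]]"

lemma quadratic_form_tridiag3:
  "x \<bullet> (tridiag3 a1 a2 a3 b1 b2 *v x) =
     a1*x$1*x$1 + 2*b1*x$1*x$2 + a2*x$2*x$2 + 2*b2*x$2*x$3 + a3*x$3*x$3"
  by (simp add: inner_vec_def matrix_vector_mult_def sum_3 algebra_simps)

lemma symmetric_matrix_tridiag3: "symmetric_matrix (tridiag3 a1 a2 a3 b1 b2)"
  by (simp add: symmetric_matrix_def transpose_def vec_eq_iff forall_3)

lemma nonneg_matrix_tridiag3_iff: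
  "nonneg_matrix (tridiag3 a1 a2 a3 b1 b2) \<longleftrightarrow> 0 \<le> a1 \<and> 0 \<le> a2 \<and> 0 \<le> a3 \<and> 0 \<le> b1 \<and> 0 \<le> b2"
  by (auto simp: nonneg_matrix_def forall_3)

lemma hadamard_powr_tridiag3:
  "hadamard_powr r (tridiag3 a1 a2 a3 b1 b2) =
     tridiag3 (a1 powr r) (a2 powr r) (a3 powr r) (b1 powr r) (b2 powr r)"
  by (simp add: hadamard_powr_def vec_eq_iff forall_3)

lemma psd_tridiag3_iff:
  "psd (tridiag3 a1 a2 a3 b1 b2) \<longleftrightarrow>
     (\<forall>x1 x2 x3. 0 \<le> a1*x1*x1 + 2*b1*x1*x2 + a2*x2*x2 + 2*b2*x2*x3 + a3*x3*x3)"
proof -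
  have "(\<forall>x::real^3. P (x$1) (x$2) (x$3)) \<longleftrightarrow> (\<forall>x1 x2 x3. P x1 x2 x3)" for P
  proof (intro iffI allI)
    fix x1 x2 x3
    assume "\<forall>x::real^3. P (x$1) (x$2) (x$3)"
    from this[rule_format, of "vector [x1, x2, x3]"] show "P x1 x2 x3" by simp
  qed simp
  then show ?thesis
    by (simp add: psd_def symmetric_matrix_tridiag3 quadratic_form_tridiag3)
qed

lemma psd_tridiag3_left_zero_iff:
  "psd (tridiag3 a1 a2 a3 0 b2) \<longleftrightarrow> 0 \<le> a1 \<and> 0 \<le> a2 \<and> 0 \<le> a3 \<and> b2*b2 \<le> a2*a3"
proof -
  have "psd (tridiag3 a1 a2 a3 0 b2) \<longleftrightarrow>
      (\<forall>x1. 0 \<le> a1*x1*x1) \<and> (\<forall>x2 x3. 0 \<le> a2*x2*x2 + 2*b2*x2*x3 + a3*x3*x3)"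
    unfolding psd_tridiag3_iff
  proof (intro iffI conjI allI)
    fix x1 x2 x3 :: real
    assume "\<forall>x1 x2 x3. 0 \<le> a1*x1*x1 + 2*0*x1*x2 + a2*x2*x2 + 2*b2*x2*x3 + a3*x3*x3"
    from this[rule_format, of x1 0 0] this[rule_format, of 0 x2 x3]
    show "0 \<le> a1*x1*x1" "0 \<le> a2*x2*x2 + 2*b2*x2*x3 + a3*x3*x3" by simp_all
  next
    fix x1 x2 x3 :: real
    assume "(\<forall>x1. 0 \<le> a1*x1*x1) \<and> (\<forall>x2 x3. 0 \<le> a2*x2*x2 + 2*b2*x2*x3 + a3*x3*x3)"
    then show "0 \<le> a1*x1*x1 + 2*0*x1*x2 + a2*x2*x2 + 2*b2*x2*x3 + a3*x3*x3"
      by (simp add: add.assoc)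
  qed
  also have "\<dots> \<longleftrightarrow> 0 \<le> a1 \<and> 0 \<le> a2 \<and> 0 \<le> a3 \<and> b2*b2 \<le> a2*a3"
  proof -
    have "(\<forall>x1. 0 \<le> a1*x1*x1) \<longleftrightarrow> 0 \<le> a1"
      by (metis mult.assoc mult_1_right mult_nonneg_nonneg zero_le_square)
    then show ?thesis using binary_quadratic_form_nonneg_iff[of a2 b2 a3] by blast
  qed
  finally show ?thesis .
qed

lemma psd_tridiag3_reverse:
  "psd (tridiag3 a3 a2 a1 b2 b1) \<longleftrightarrow> psd (tridiag3 a1 a2 a3 b1 b2)"
proof -
  have "a3*x1*x1 + 2*b2*x1*x2 + a2*x2*x2 + 2*b1*x2*x3 + a1*x3*x3 =
        a1*x3*x3 + 2*b1*x3*x2 + a2*x2*x2 + 2*b2*x2*x1 + a3*x1*x1" for x1 x2 x3 :: real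
    by (simp add: algebra_simps)
  then show ?thesis
    unfolding psd_tridiag3_iff by (metis (no_types))
qed

lemma psd_tridiag3_right_zero_iff:
  "psd (tridiag3 a1 a2 a3 b1 0) \<longleftrightarrow> 0 \<le> a1 \<and> 0 \<le> a2 \<and> 0 \<le> a3 \<and> b1*b1 \<le> a1*a2"
  using psd_tridiag3_left_zero_iff[where ?a1.0 = a3 and ?a3.0 = a1 and ?b2.0 = b1]
    psd_tridiag3_reverse[where ?b2.0 = 0]
  by (auto simp: mult.commute)

lemma psd_hadamard_powr_tridiag3_decoupled:
  assumes psd: "psd (tridiag3 a1 a2 a3 b1 b2)" and "b1 * b2 = 0" "0 \<le> b1" "0 \<le> b2" "0 \<le> r"
  shows "psd (hadamard_powr r (tridiag3 a1 a2 a3 b1 b2))"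
proof (cases "b1 = 0")
  case True
  with psd have "0 \<le> a2" "0 \<le> a3" "b2*b2 \<le> a2*a3"
    by (simp_all add: psd_tridiag3_left_zero_iff)
  with square_le_mult_powr[of r b2 a2 a3] True assms(4,5) show ?thesis
    by (simp add: hadamard_powr_tridiag3 psd_tridiag3_left_zero_iff)
next
  case False
  with \<open>b1 * b2 = 0\<close> have "b2 = 0" by simp
  with psd have "0 \<le> a1" "0 \<le> a2" "b1*b1 \<le> a1*a2"
    by (simp_all add: psd_tridiag3_right_zero_iff)
  with square_le_mult_powr[of r b1 a1 a2] \<open>b2 = 0\<close> assms(3,5) show ?thesis
    by (simp add: hadamard_powr_tridiag3 psd_tridiag3_right_zero_iff)
qed

text \<open>Here \<open>a\<^sub>i\<close> need not be nonnegative: \<open>a powr 0\<close> is \<open>0\<close> or \<open>1\<close> for every real \<open>a\<close>.\<close>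

lemma eventually_not_psd_hadamard_powr_tridiag3:
  assumes "0 < b1" "0 < b2"
  shows "\<forall>\<^sub>F r in at_right 0. \<not> psd (hadamard_powr r (tridiag3 a1 a2 a3 b1 b2))"
proof -
  define q where "q r = a1 powr r + a2 powr r + a3 powr r - 2 * b1 powr r - 2 * b2 powr r" for r
  have "(q \<longlongrightarrow> q 0) (at_right 0)"
    unfolding q_def by (intro tendsto_intros tendsto_powr_exponent tendsto_ident_at)
  moreover have "q 0 < 0"
    using assms by (simp add: q_def)
  ultimately have "\<forall>\<^sub>F r in at_right 0. q r < 0"
    by (rule order_tendstoD(2))
  then show ?thesis
  proof (rule eventually_mono)
    fix r
    assume "q r < 0"
    show "\<not> psd (hadamard_powr r (tridiag3 a1 a2 a3 b1 b2))"
    proof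
      assume "psd (hadamard_powr r (tridiag3 a1 a2 a3 b1 b2))"
      then have "\<forall>x1 x2 x3. 0 \<le> a1 powr r*x1*x1 + 2*b1 powr r*x1*x2 + a2 powr r*x2*x2
                             + 2*b2 powr r*x2*x3 + a3 powr r*x3*x3"
        unfolding hadamard_powr_tridiag3 psd_tridiag3_iff .
      from this[rule_format, of 1 "-1" 1] have "0 \<le> q r"
        by (simp add: q_def)
      with \<open>q r < 0\<close> show False by simp
    qed
  qed
qed

theorem lemma2p5:
  fixes a1 a2 a3 b1 b2 :: real
  assumes "0 \<le> a1" "0 \<le> a2" "0 \<le> a3" "0 \<le> b1" "0 \<le> b2"
    and "psd (vector [vector [a1, b1, 0], vector [b1, a2, b2], vector [0, b2, a3]] :: real^3^3)"
  shows "infinitely_divisible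
           (vector [vector [a1, b1, 0], vector [b1, a2, b2], vector [0, b2, a3]] :: real^3^3)
         \<longleftrightarrow> b1 * b2 = 0"
proof
  assume divisible: "infinitely_divisible (tridiag3 a1 a2 a3 b1 b2)"
  show "b1 * b2 = 0"
  proof (rule ccontr)
    assume "b1 * b2 \<noteq> 0"
    with assms(4,5) have "0 < b1" "0 < b2" by auto
    then have "\<forall>\<^sub>F r in at_right 0. 0 < r \<and> \<not> psd (hadamard_powr r (tridiag3 a1 a2 a3 b1 b2))"
      by (intro eventually_conj eventually_at_right_less eventually_not_psd_hadamard_powr_tridiag3)
    then obtain r where "0 < r" "\<not> psd (hadamard_powr r (tridiag3 a1 a2 a3 b1 b2))"
      using eventually_happens'[OF trivial_limit_at_right_real] by blast
    with divisible show False
      unfolding infinitely_divisible_def by blast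
  qed
next
  assume "b1 * b2 = 0"
  with assms show "infinitely_divisible (tridiag3 a1 a2 a3 b1 b2)"
    by (simp add: infinitely_divisible_def nonneg_matrix_tridiag3_iff symmetric_matrix_tridiag3
        psd_hadamard_powr_tridiag3_decoupled)
qed

end
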